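(* For every $s\ge 1$ the sequence $N\mapsto \alpha_{N,s}$ ($N\ge 2$) is non-decreasing: $\alpha_{N,s}\le\alpha_{N+1,s}$ for all $N\ge 2$.
   Context: For $N\ge 2$ and $s\ge 1$, $$\alpha_{N,s} := \inf\left\{\frac{\sum_{1\le j<k\le N}\frac{|x_j|^s+|x_k|^s}{|x_j-x_k|}}{(N-1)\sum_{k=1}^N|x_k|^{s-1}} : x_1,\dots,x_N\in\mathbb{R}^3 \text{ pairwise distinct}\right\},$$ with the convention $|x|^0=1$ (also for $x=0$) when $s=1$. *)

theory Defs
  imports "HOL-Analysis.Analysis"
begin

text \<open>Power of a norm with real exponent, with the convention that the
  zeroth power is 1 (also at 0); for a > 0 it is the usual t powr a, and 0 powr a = 0.\<close>
definition npow :: "real \<Rightarrow> real \<Rightarrow> real" where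
  "npow t a = (if a = 0 then 1 else t powr a)"

definition ratio :: "nat \<Rightarrow> real \<Rightarrow> (nat \<Rightarrow> real^3) \<Rightarrow> real" where
  "ratio N s x =
     (\<Sum>k<N. \<Sum>j<k. (npow (norm (x j)) s + npow (norm (x k)) s) / norm (x j - x k))
     / ((real N - 1) * (\<Sum>k<N. npow (norm (x k)) (s - 1)))"

definition alpha :: "nat \<Rightarrow> real \<Rightarrow> real" where
  "alpha N s = Inf {ratio N s x | x. inj_on x {..<N}}"

end

theory Submission
  imports Defs
begin

text \<open>Deleting the point x_i from an injective configuration of N + 1 points leaves one
  of N points, so the pair sum over the remaining points is at least alpha_N (N - 1) times
  the sum of |x_k|^(s-1) over k \<noteq> i. Summing over i, every pair of points survives
  N - 1 deletions and every single point N deletions; dividing by N - 1 gives exactly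
  alpha_N \<le> ratio_(N+1)(x).\<close>

definition offdiag_sum :: "('a \<Rightarrow> 'a \<Rightarrow> 'b::comm_monoid_add) \<Rightarrow> 'a set \<Rightarrow> 'b" where
  "offdiag_sum f A = (\<Sum>k\<in>A. \<Sum>j\<in>A - {k}. f j k)"

lemma offdiag_sum_remove:
  assumes "finite A" "i \<in> A"
  shows "offdiag_sum f A = offdiag_sum f (A - {i}) + (\<Sum>j\<in>A - {i}. f j i + f i j)"
proof -
  have "offdiag_sum f A = (\<Sum>j\<in>A - {i}. f j i) + (\<Sum>k\<in>A - {i}. \<Sum>j\<in>A - {k}. f j k)"
    unfolding offdiag_sum_def using assms by (simp add: sum.remove)
  also have "(\<Sum>k\<in>A - {i}. \<Sum>j\<in>A - {k}. f j k)
      = (\<Sum>k\<in>A - {i}. f i k + (\<Sum>j\<in>A - {i} - {k}. f j k))"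
  proof (rule sum.cong[OF refl])
    fix k assume "k \<in> A - {i}"
    then have "A - {k} = insert i (A - {i} - {k})" using assms by auto
    then show "(\<Sum>j\<in>A - {k}. f j k) = f i k + (\<Sum>j\<in>A - {i} - {k}. f j k)" using assms by simp
  qed
  finally show ?thesis by (simp add: sum.distrib offdiag_sum_def ac_simps)
qed

lemma offdiag_sum_swap:
  assumes "finite A"
  shows "offdiag_sum (\<lambda>j k. f k j) A = offdiag_sum f A"
proof -
  have diff: "A \<inter> {j. j \<noteq> k} = A - {k}" "A \<inter> {j. k \<noteq> j} = A - {k}" for k by auto
  have "offdiag_sum (\<lambda>j k. f k j) A = (\<Sum>k\<in>A. \<Sum>j\<in>A. if j \<noteq> k then f k j else 0)"
    unfolding offdiag_sum_def using assms by (simp add: sum.If_cases diff)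
  also have "\<dots> = (\<Sum>j\<in>A. \<Sum>k\<in>A. if j \<noteq> k then f k j else 0)" by (rule sum.swap)
  also have "\<dots> = offdiag_sum f A"
    unfolding offdiag_sum_def using assms by (simp add: sum.If_cases diff)
  finally show ?thesis .
qed

lemma offdiag_sum_reindex:
  assumes "inj_on \<phi> A"
  shows "offdiag_sum f (\<phi> ` A) = offdiag_sum (\<lambda>j k. f (\<phi> j) (\<phi> k)) A"
proof -
  have "offdiag_sum f (\<phi> ` A) = (\<Sum>k\<in>A. \<Sum>j\<in>\<phi> ` A - {\<phi> k}. f j (\<phi> k))"
    unfolding offdiag_sum_def using assms by (simp add: sum.reindex)
  also have "\<dots> = (\<Sum>k\<in>A. \<Sum>j\<in>A - {k}. f (\<phi> j) (\<phi> k))"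
  proof (rule sum.cong[OF refl])
    fix k assume "k \<in> A"
    then have "\<phi> ` A - {\<phi> k} = \<phi> ` (A - {k})" using assms by (auto simp: inj_on_def)
    moreover have "inj_on \<phi> (A - {k})" using assms by (rule inj_on_subset) auto
    ultimately show "(\<Sum>j\<in>\<phi> ` A - {\<phi> k}. f j (\<phi> k))
        = (\<Sum>j\<in>A - {k}. f (\<phi> j) (\<phi> k))"
      by (simp add: sum.reindex)
  qed
  finally show ?thesis by (simp add: offdiag_sum_def)
qed

lemma offdiag_sum_lessThan_eq_double_triangle_sum:
  fixes f :: "nat \<Rightarrow> nat \<Rightarrow> 'b::comm_semiring_1"
  assumes "\<And>j k. f j k = f k j"
  shows "offdiag_sum f {..<N} = 2 * (\<Sum>k<N. \<Sum>j<k. f j k)"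
proof (induction N)
  case 0
  show ?case by (simp add: offdiag_sum_def)
next
  case (Suc N)
  have "offdiag_sum f {..<Suc N} = offdiag_sum f {..<N} + (\<Sum>j<N. f j N + f N j)"
    using offdiag_sum_remove[of "{..<Suc N}" N f] by (simp add: lessThan_Suc)
  also have "\<dots> = 2 * (\<Sum>k<Suc N. \<Sum>j<k. f j k)"
    using Suc assms by (simp add: mult_2 distrib_left sum.distrib)
  finally show ?case .
qed

lemma sum_offdiag_sum_remove:
  fixes f :: "'a \<Rightarrow> 'a \<Rightarrow> 'b::comm_ring_1"
  assumes "finite A"
  shows "(\<Sum>i\<in>A. offdiag_sum f (A - {i})) = (of_nat (card A) - 2) * offdiag_sum f A"
proof -
  have "offdiag_sum f (A - {i}) = offdiag_sum f A - (\<Sum>j\<in>A - {i}. f j i) - (\<Sum>j\<in>A - {i}. f i j)"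
    if "i \<in> A" for i
    using offdiag_sum_remove[OF assms that, of f] by (simp add: sum.distrib algebra_simps)
  then have "(\<Sum>i\<in>A. offdiag_sum f (A - {i}))
      = (\<Sum>i\<in>A. offdiag_sum f A - (\<Sum>j\<in>A - {i}. f j i) - (\<Sum>j\<in>A - {i}. f i j))"
    by (rule sum.cong[OF refl])
  also have "\<dots> = of_nat (card A) * offdiag_sum f A - offdiag_sum f A
                    - offdiag_sum (\<lambda>j k. f k j) A"
    by (simp add: sum_subtractf offdiag_sum_def)
  also have "\<dots> = (of_nat (card A) - 2) * offdiag_sum f A"
    unfolding offdiag_sum_swap[OF assms, of f] by (simp add: algebra_simps)
  finally show ?thesis .
qed

lemma sum_sum_remove:
  fixes h :: "'a \<Rightarrow> 'b::comm_ring_1"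
  assumes "finite A"
  shows "(\<Sum>i\<in>A. sum h (A - {i})) = (of_nat (card A) - 1) * sum h A"
proof -
  have "(\<Sum>i\<in>A. sum h (A - {i})) = (\<Sum>i\<in>A. sum h A - h i)"
    using assms by (intro sum.cong refl) (simp add: sum_diff1)
  then show ?thesis by (simp add: sum_subtractf algebra_simps)
qed

definition pair_kernel :: "real \<Rightarrow> real^3 \<Rightarrow> real^3 \<Rightarrow> real" where
  "pair_kernel s a b = (npow (norm a) s + npow (norm b) s) / norm (a - b)"

lemma pair_kernel_commute: "pair_kernel s a b = pair_kernel s b a"
  by (simp add: pair_kernel_def norm_minus_commute add.commute)

lemma ratio_eq_offdiag_sum:
  "ratio N s x = offdiag_sum (\<lambda>j k. pair_kernel s (x j) (x k)) {..<N}
     / (2 * ((real N - 1) * (\<Sum>k<N. npow (norm (x k)) (s - 1))))"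
proof -
  have "offdiag_sum (\<lambda>j k. pair_kernel s (x j) (x k)) {..<N}
      = 2 * (\<Sum>k<N. \<Sum>j<k. pair_kernel s (x j) (x k))"
    by (rule offdiag_sum_lessThan_eq_double_triangle_sum) (rule pair_kernel_commute)
  then show ?thesis by (simp add: ratio_def pair_kernel_def)
qed

lemma npow_nonneg: "npow t a \<ge> 0"
  by (simp add: npow_def)

lemma npow_pos: "t > 0 \<Longrightarrow> npow t a > 0"
  by (simp add: npow_def)

lemma sum_npow_norm_pos:
  fixes x :: "'i \<Rightarrow> 'a::real_normed_vector"
  assumes "inj_on x B" "finite B" "2 \<le> card B"
  shows "0 < (\<Sum>k\<in>B. npow (norm (x k)) c)"
proof -
  obtain a b where "a \<in> B" "b \<in> B" "a \<noteq> b"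
    using assms(2,3) by (meson card_le_Suc0_iff_eq dual_order.strict_trans1 leD less_2_cases_iff)
  then have "x a \<noteq> x b" using assms(1) by (auto simp: inj_on_def)
  then obtain m where m: "m \<in> B" "x m \<noteq> 0" using \<open>a \<in> B\<close> \<open>b \<in> B\<close> by metis
  then have "0 < npow (norm (x m)) c" by (simp add: npow_pos)
  also have "\<dots> \<le> (\<Sum>k\<in>B. npow (norm (x k)) c)"
    using assms(2) m by (intro member_le_sum) (auto simp: npow_nonneg)
  finally show ?thesis .
qed

lemma ratio_nonneg: "ratio N s x \<ge> 0"
  by (cases N) (auto simp: ratio_def npow_nonneg intro!: divide_nonneg_nonneg
      mult_nonneg_nonneg sum_nonneg add_nonneg_nonneg)

lemma alpha_le_ratio: "inj_on x {..<N} \<Longrightarrow> alpha N s \<le> ratio N s x"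
  unfolding alpha_def
  by (rule cInf_lower) (auto intro: bdd_belowI[of _ 0] simp: ratio_nonneg)

lemma alpha_mult_le_offdiag_sum:
  fixes x :: "'i \<Rightarrow> real^3"
  assumes "inj_on x B" "finite B" "card B = N" "N \<ge> 2"
  shows "alpha N s * (2 * ((real N - 1) * (\<Sum>k\<in>B. npow (norm (x k)) (s - 1))))
           \<le> offdiag_sum (\<lambda>j k. pair_kernel s (x j) (x k)) B"
proof -
  obtain \<phi> where \<phi>: "bij_betw \<phi> {..<N} B"
    using ex_bij_betw_nat_finite[OF assms(2)] assms(3) by (auto simp: atLeast0LessThan)
  then have inj: "inj_on \<phi> {..<N}" and img: "\<phi> ` {..<N} = B" by (auto simp: bij_betw_def)
  have "inj_on (x \<circ> \<phi>) {..<N}" using assms(1) inj img by (simp add: comp_inj_on)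
  then have "alpha N s \<le> ratio N s (x \<circ> \<phi>)" by (rule alpha_le_ratio)
  also have "\<dots> = offdiag_sum (\<lambda>j k. pair_kernel s (x j) (x k)) B
                    / (2 * ((real N - 1) * (\<Sum>k\<in>B. npow (norm (x k)) (s - 1))))"
    unfolding ratio_eq_offdiag_sum img[symmetric]
    by (simp add: offdiag_sum_reindex[OF inj] sum.reindex[OF inj])
  moreover have "0 < 2 * ((real N - 1) * (\<Sum>k\<in>B. npow (norm (x k)) (s - 1)))"
    using sum_npow_norm_pos[OF assms(1,2)] assms(3,4) by simp
  ultimately show ?thesis by (simp add: pos_le_divide_eq)
qed

lemma alpha_le_ratio_Suc:
  assumes "N \<ge> 2" "inj_on x {..<Suc N}"
  shows "alpha N s \<le> ratio (Suc N) s x"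
proof -
  define A where "A = {..<Suc N}"
  define Q where "Q = offdiag_sum (\<lambda>j k. pair_kernel s (x j) (x k)) A"
  define h where "h k = npow (norm (x k)) (s - 1)" for k
  define S where "S = sum h A"
  have "(\<Sum>i\<in>A. sum h (A - {i})) = real N * S"
    using sum_sum_remove[of A h] by (simp add: A_def S_def)
  then have "alpha N s * (2 * (real N - 1)) * (real N * S)
      = (\<Sum>i\<in>A. alpha N s * (2 * ((real N - 1) * sum h (A - {i}))))"
    by (simp add: sum_distrib_left[symmetric] mult_ac)
  also have "\<dots> \<le> (\<Sum>i\<in>A. offdiag_sum (\<lambda>j k. pair_kernel s (x j) (x k)) (A - {i}))"
    unfolding h_def using assms
    by (intro sum_mono alpha_mult_le_offdiag_sum) (auto simp: A_def intro: inj_on_subset)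
  also have "\<dots> = (real N - 1) * Q"
    using sum_offdiag_sum_remove[of A] by (simp add: A_def Q_def)
  finally have "(real N - 1) * (alpha N s * (2 * (real N * S))) \<le> (real N - 1) * Q"
    by (simp add: mult_ac)
  then have "alpha N s * (2 * (real N * S)) \<le> Q"
    using assms(1) by (simp add: mult_le_cancel_left_pos)
  moreover have "0 < S"
    unfolding S_def A_def h_def using assms by (intro sum_npow_norm_pos) auto
  moreover have "ratio (Suc N) s x = Q / (2 * (real N * S))"
    by (simp add: ratio_eq_offdiag_sum Q_def S_def A_def h_def)
  ultimately show ?thesis using assms(1) by (simp add: le_divide_eq)
qed

theorem lemma3p1:
  fixes N :: nat and s :: real
  assumes "s \<ge> 1" and "N \<ge> 2"
  shows "alpha N s \<le> alpha (N + 1) s"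
proof -
  have "inj_on (of_nat :: nat \<Rightarrow> real^3) {..<N + 1}"
    using inj_of_nat by (rule inj_on_subset) simp
  then have "{ratio (N + 1) s x | x. inj_on x {..<N + 1}} \<noteq> {}" by blast
  then show ?thesis
    unfolding alpha_def[of "N + 1"]
    by (rule cInf_greatest) (use alpha_le_ratio_Suc[OF assms(2)] in auto)
qed

end
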